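(* Let $E:[0,\infty)\times\mathbb{R}^2\to\mathbb{R}^2$ and $b:[0,\infty)\times\mathbb{R}^2\to\mathbb{R}$ be continuous with $b$ nowhere vanishing, $B=b\,e_3$. Let $\alpha=0.24169426078821$, $\beta=\alpha/4$, $\eta=0.12915286960590$, $\gamma=1/2-\alpha-\beta-\eta$. Fix $\Delta t>0$, $T>0$, $t^n=n\Delta t$, $t^{n+1/2}=t^n+\Delta t/2$, $N_T=\lfloor T/\Delta t\rfloor$. For each $\varepsilon>0$ let $(x^n_\varepsilon,v^n_\varepsilon)_{0\le n\le N_T}$ be generated (dropping the index $\varepsilon$ inside stages) by: given $(x^n,v^n)$, find stages $(x^{(i)},v^{(i)})$, $i=1,\dots,4$, with $$x^{(1)}=x^n+\tfrac{\alpha\Delta t}{\varepsilon}v^{(1)},\ v^{(1)}=v^n+\tfrac{\alpha\Delta t}{\varepsilon}F^{(1)},\ F^{(1)}=\tfrac{v^{(1)}}{\varepsilon}\wedge B(t^n,x^n)+E(t^n,x^n);$$ $$x^{(2)}=x^n-\tfrac{\alpha\Delta t}{\varepsilon}v^{(1)}+\tfrac{\alpha\Delta t}{\varepsilon}v^{(2)},\ v^{(2)}=v^n-\tfrac{\alpha\Delta t}{\varepsilon}F^{(1)}+\tfrac{\alpha\Delta t}{\varepsilon}F^{(2)},\ F^{(2)}=\tfrac{v^{(2)}}{\varepsilon}\wedge B(t^n,x^n)+E(t^n,x^n);$$ $$x^{(3)}=x^n+\tfrac{(1-\alpha)\Delta t}{\varepsilon}v^{(2)}+\tfrac{\alpha\Delta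 t}{\varepsilon}v^{(3)},\ v^{(3)}=v^n+\tfrac{(1-\alpha)\Delta t}{\varepsilon}F^{(2)}+\tfrac{\alpha\Delta t}{\varepsilon}F^{(3)},$$ $$F^{(3)}=\tfrac{v^{(3)}}{\varepsilon}\wedge B(t^{n+1},\bar x^{(2)})+E(t^{n+1},\bar x^{(2)}),\quad \bar x^{(2)}=x^n+\tfrac{\Delta t}{\varepsilon}v^{(2)};$$ $$x^{(4)}=x^n+\tfrac{\Delta t}{\varepsilon}\big(\beta v^{(1)}+\eta v^{(2)}+\gamma v^{(3)}+\alpha v^{(4)}\big),\ v^{(4)}=v^n+\tfrac{\Delta t}{\varepsilon}\big(\beta F^{(1)}+\eta F^{(2)}+\gamma F^{(3)}+\alpha F^{(4)}\big),$$ $$F^{(4)}=\tfrac{v^{(4)}}{\varepsilon}\wedge B(t^{n+1/2},\bar x^{(3)})+E(t^{n+1/2},\bar x^{(3)}),\quad \bar x^{(3)}=x^n+\tfrac{\Delta t}{4\varepsilon}(v^{(2)}+v^{(3)});$$ and finally $x^{n+1}=x^n+\frac{\Delta t}{6\varepsilon}(v^{(2)}+v^{(3)}+4v^{(4)})$, $v^{n+1}=v^n+\frac{\Delta t}{6\varepsilon}(F^{(2)}+F^{(3)}+4F^{(4)})$. Assume that for every $1\le n\le N_T$ the family $(x^n_\varepsilon,\varepsilon v^n_\varepsilon)_{\varepsilon>0}$ is bounded uniformly in $\varepsilon$ and that $(x^0_\varepsilon,\varepsilon v^0_\varepsilon)\to(y^0,0)$ as $\varepsilon\to0$. Then for every $0\le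 n\le N_T$, $x^n_\varepsilon\to y^n$ as $\varepsilon\to0$, where $(y^n)$ starts from $y^0$ and satisfies $$U^{(2)}=U(t^n,y^n),\quad y^{(2)}=y^n+\Delta t\,U^{(2)},\quad U^{(3)}=U(t^{n+1},y^{(2)}),$$ $$y^{(3)}=y^n+\tfrac{\Delta t}{4}(U^{(2)}+U^{(3)}),\quad U^{(4)}=U(t^{n+1/2},y^{(3)}),\quad y^{n+1}=y^n+\tfrac{\Delta t}{6}(U^{(2)}+U^{(3)}+4U^{(4)}).$$
   Context: Vectors of $\mathbb{R}^2$ are identified with vectors $(w_1,w_2,0)$ of $\mathbb{R}^3$, $e_3=(0,0,1)$, and $\wedge$ is the cross product; thus for $w\in\mathbb{R}^2$ and $B=b\,e_3$, $w\wedge B=b\,(w_2,-w_1)\in\mathbb{R}^2$. The guiding-center drift is $U(t,x)=\dfrac{E(t,x)\wedge B(t,x)}{\|B(t,x)\|^2}$. *)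

theory Defs
  imports "HOL-Analysis.Analysis"
begin

text \<open>Vectors of R^2 are represented as pairs real \<times> real. For w in R^2 and
  B = b e3, the cross product w \<and> B is b (w2, -w1).\<close>

definition wedge :: "real \<times> real \<Rightarrow> real \<Rightarrow> real \<times> real" where
  "wedge w bb = (bb * snd w, - (bb * fst w))"

definition alpha :: real where "alpha = 0.24169426078821"
definition beta :: real where "beta = alpha / 4"
definition eta :: real where "eta = 0.12915286960590"
definition gamma :: real where "gamma = 1/2 - alpha - beta - eta"

text \<open>Guiding-center drift U = (E \<and> B)/|B|^2 with B = b e3, so |B|^2 = b^2.\<close>
definition Udrift ::
  "(real \<Rightarrow> real \<times> real \<Rightarrow> real \<times> real) \<Rightarrow> (real \<Rightarrow> real \<times> real \<Rightarrow> real) \<Rightarrow>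
   real \<Rightarrow> real \<times> real \<Rightarrow> real \<times> real" where
  "Udrift E b t x = (1 / (b t x)^2) *\<^sub>R wedge (E t x) (b t x)"

definition rk_step ::
  "(real \<Rightarrow> real \<times> real \<Rightarrow> real \<times> real) \<Rightarrow> (real \<Rightarrow> real \<times> real \<Rightarrow> real) \<Rightarrow>
   real \<Rightarrow> real \<Rightarrow> real \<Rightarrow> real \<times> real \<Rightarrow> real \<times> real \<Rightarrow>
   (nat \<Rightarrow> real \<times> real) \<Rightarrow> (nat \<Rightarrow> real \<times> real) \<Rightarrow> real \<times> real \<Rightarrow> real \<times> real \<Rightarrow> bool" where
  "rk_step E b dt eps tn xn vn X V xn1 vn1 \<longleftrightarrow>
    (let Fz = (\<lambda>w t y. wedge ((1/eps) *\<^sub>R w) (b t y) + E t y);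
         c = alpha * dt / eps;
         xb2 = xn + (dt / eps) *\<^sub>R V 2;
         xb3 = xn + (dt / (4 * eps)) *\<^sub>R (V 2 + V 3);
         F1 = Fz (V 1) tn xn;
         F2 = Fz (V 2) tn xn;
         F3 = Fz (V 3) (tn + dt) xb2;
         F4 = Fz (V 4) (tn + dt / 2) xb3
     in X 1 = xn + c *\<^sub>R V 1 \<and>
        V 1 = vn + c *\<^sub>R F1 \<and>
        X 2 = xn - c *\<^sub>R V 1 + c *\<^sub>R V 2 \<and>
        V 2 = vn - c *\<^sub>R F1 + c *\<^sub>R F2 \<and>
        X 3 = xn + ((1 - alpha) * dt / eps) *\<^sub>R V 2 + c *\<^sub>R V 3 \<and>
        V 3 = vn + ((1 - alpha) * dt / eps) *\<^sub>R F2 + c *\<^sub>R F3 \<and>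
        X 4 = xn + (dt / eps) *\<^sub>R (beta *\<^sub>R V 1 + eta *\<^sub>R V 2 + gamma *\<^sub>R V 3 + alpha *\<^sub>R V 4) \<and>
        V 4 = vn + (dt / eps) *\<^sub>R (beta *\<^sub>R F1 + eta *\<^sub>R F2 + gamma *\<^sub>R F3 + alpha *\<^sub>R F4) \<and>
        xn1 = xn + (dt / (6 * eps)) *\<^sub>R (V 2 + V 3 + 4 *\<^sub>R V 4) \<and>
        vn1 = vn + (dt / (6 * eps)) *\<^sub>R (F2 + F3 + 4 *\<^sub>R F4))"

definition y_step ::
  "(real \<Rightarrow> real \<times> real \<Rightarrow> real \<times> real) \<Rightarrow> (real \<Rightarrow> real \<times> real \<Rightarrow> real) \<Rightarrow>
   real \<Rightarrow> real \<Rightarrow> real \<times> real \<Rightarrow> real \<times> real" where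
  "y_step E b dt tn yn =
    (let U2 = Udrift E b tn yn;
         y2 = yn + dt *\<^sub>R U2;
         U3 = Udrift E b (tn + dt) y2;
         y3 = yn + (dt / 4) *\<^sub>R (U2 + U3);
         U4 = Udrift E b (tn + dt / 2) y3
     in yn + (dt / 6) *\<^sub>R (U2 + U3 + 4 *\<^sub>R U4))"

primrec y_seq ::
  "(real \<Rightarrow> real \<times> real \<Rightarrow> real \<times> real) \<Rightarrow> (real \<Rightarrow> real \<times> real \<Rightarrow> real) \<Rightarrow>
   real \<Rightarrow> real \<times> real \<Rightarrow> nat \<Rightarrow> real \<times> real" where
  "y_seq E b dt y0 0 = y0"
| "y_seq E b dt y0 (Suc n) = y_step E b dt (real n * dt) (y_seq E b dt y0 n)"

end

theory Submission
  imports Defs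
begin

text \<open>Write \<open>u = V/\<epsilon>\<close> for the stage velocities. Multiplied by \<open>\<epsilon>\<close>, each implicit
  stage becomes \<open>\<epsilon>\<^sup>2 u = g + \<alpha> \<Delta>t (u \<and> B + E)\<close>, where \<open>g\<close> combines \<open>\<epsilon> v\<^sup>n\<close> with the
  forces \<open>u \<and> B + E\<close> of the earlier stages. This 2\<times>2 linear system stays uniformly
  invertible as \<open>\<epsilon> \<rightarrow> 0\<close>, so when \<open>g \<rightarrow> 0\<close> its solution \<open>u\<close> converges to the solution of
  \<open>u \<and> B + E = 0\<close>, i.e. to the drift \<open>U\<close>, and the stage force tends to 0. Taking the
  stages in order, the limits of \<open>u\<^sup>(\<^sup>2\<^sup>)\<close>, \<open>u\<^sup>(\<^sup>3\<^sup>)\<close>, \<open>u\<^sup>(\<^sup>4\<^sup>)\<close> are exactly the drifts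
  \<open>U\<^sup>(\<^sup>2\<^sup>)\<close>, \<open>U\<^sup>(\<^sup>3\<^sup>)\<close>, \<open>U\<^sup>(\<^sup>4\<^sup>)\<close> of the limit scheme, hence \<open>x\<^sup>n\<^sup>+\<^sup>1 \<rightarrow> y\<^sup>n\<^sup>+\<^sup>1\<close>; and
  \<open>\<epsilon> v\<^sup>n\<^sup>+\<^sup>1\<close> is \<open>\<epsilon> v\<^sup>n\<close> plus a combination of stage forces, so it tends to 0 as well.\<close>

definition lorentz_force ::
  "(real \<Rightarrow> real \<times> real \<Rightarrow> real \<times> real) \<Rightarrow> (real \<Rightarrow> real \<times> real \<Rightarrow> real) \<Rightarrow>
   real \<Rightarrow> real \<times> real \<Rightarrow> real \<times> real \<Rightarrow> real \<times> real" where
  "lorentz_force E b t y u = wedge u (b t y) + E t y"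

lemma wedge_scaleR_left: "wedge (c *\<^sub>R w) k = c *\<^sub>R wedge w k"
  by (simp add: wedge_def)

lemma wedge_mult_right: "wedge w (c * k) = c *\<^sub>R wedge w k"
  by (simp add: wedge_def)

lemma tendsto_wedge [tendsto_intros]:
  assumes "(w \<longlongrightarrow> w0) F" "(k \<longlongrightarrow> k0) F"
  shows "((\<lambda>z. wedge (w z) (k z)) \<longlongrightarrow> wedge w0 k0) F"
  unfolding wedge_def using assms by (intro tendsto_intros)

lemma wedge_drift_solves: "k \<noteq> 0 \<Longrightarrow> wedge ((1 / k\<^sup>2) *\<^sub>R wedge e k) k + e = 0"
  by (simp add: wedge_def power2_eq_square field_simps prod_eq_iff)

lemma wedge_stage_solution:
  fixes u g e :: "real \<times> real"
  assumes eq: "s *\<^sub>R u = g + c *\<^sub>R (wedge u k + e)" and d: "s\<^sup>2 + c\<^sup>2 * k\<^sup>2 \<noteq> 0"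
  shows "u = (1 / (s\<^sup>2 + c\<^sup>2 * k\<^sup>2)) *\<^sub>R (s *\<^sub>R (g + c *\<^sub>R e) + wedge (g + c *\<^sub>R e) (c * k))"
proof -
  obtain u1 u2 where u: "u = (u1, u2)" by fastforce
  obtain r1 r2 where r: "g + c *\<^sub>R e = (r1, r2)" by fastforce
  from eq have 1: "s * u1 - c * k * u2 = r1" and 2: "c * k * u1 + s * u2 = r2"
    using r by (auto simp: u wedge_def prod_eq_iff algebra_simps)
  have "(s\<^sup>2 + c\<^sup>2 * k\<^sup>2) * u1 = s * r1 + c * k * r2"
    "(s\<^sup>2 + c\<^sup>2 * k\<^sup>2) * u2 = s * r2 - c * k * r1"
    unfolding 1[symmetric] 2[symmetric] by (simp_all add: algebra_simps power2_eq_square)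
  with d show ?thesis
    by (simp add: u r wedge_def field_simps)
qed

lemma tendsto_wedge_stage:
  fixes u g e :: "'z \<Rightarrow> real \<times> real"
  assumes c: "c \<noteq> 0" and k0: "k0 \<noteq> 0"
    and s: "(s \<longlongrightarrow> 0) F" and g: "(g \<longlongrightarrow> 0) F" and k: "(k \<longlongrightarrow> k0) F" and e: "(e \<longlongrightarrow> e0) F"
    and eq: "\<forall>\<^sub>F z in F. s z *\<^sub>R u z = g z + c *\<^sub>R (wedge (u z) (k z) + e z)"
  shows "(u \<longlongrightarrow> (1 / k0\<^sup>2) *\<^sub>R wedge e0 k0) F"
    and "((\<lambda>z. wedge (u z) (k z) + e z) \<longlongrightarrow> 0) F"
proof -
  let ?d = "\<lambda>z. (s z)\<^sup>2 + c\<^sup>2 * (k z)\<^sup>2"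
  let ?r = "\<lambda>z. g z + c *\<^sub>R e z"
  have d: "(?d \<longlongrightarrow> c\<^sup>2 * k0\<^sup>2) F"
    using s k by (auto intro!: tendsto_eq_intros)
  have d0: "c\<^sup>2 * k0\<^sup>2 \<noteq> 0" using c k0 by simp
  have "((\<lambda>z. (1 / ?d z) *\<^sub>R (s z *\<^sub>R ?r z + wedge (?r z) (c * k z))) \<longlongrightarrow>
      (1 / (c\<^sup>2 * k0\<^sup>2)) *\<^sub>R (0 *\<^sub>R (0 + c *\<^sub>R e0) + wedge (0 + c *\<^sub>R e0) (c * k0))) F"
    using s g k e d d0 by (intro tendsto_intros)
  moreover have "(1 / (c\<^sup>2 * k0\<^sup>2)) *\<^sub>R (0 *\<^sub>R (0 + c *\<^sub>R e0) + wedge (0 + c *\<^sub>R e0) (c * k0))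
      = (1 / k0\<^sup>2) *\<^sub>R wedge e0 k0"
    using c by (simp add: wedge_scaleR_left wedge_mult_right power2_eq_square)
  moreover have "\<forall>\<^sub>F z in F. (1 / ?d z) *\<^sub>R (s z *\<^sub>R ?r z + wedge (?r z) (c * k z)) = u z"
    using eq tendsto_imp_eventually_ne[OF d d0]
    by eventually_elim (rule wedge_stage_solution[symmetric])
  ultimately show u: "(u \<longlongrightarrow> (1 / k0\<^sup>2) *\<^sub>R wedge e0 k0) F"
    by (simp add: Lim_transform_eventually)
  have "((\<lambda>z. wedge (u z) (k z) + e z) \<longlongrightarrow> wedge ((1 / k0\<^sup>2) *\<^sub>R wedge e0 k0) k0 + e0) F"
    using u k e by (intro tendsto_intros)
  then show "((\<lambda>z. wedge (u z) (k z) + e z) \<longlongrightarrow> 0) F"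
    by (simp add: wedge_drift_solves[OF k0])
qed

lemma tendsto_compose_time_slice:
  assumes "continuous_on ({0..} \<times> UNIV) (\<lambda>q. f (fst q) (snd q))" "(t::real) \<ge> 0"
    and "(p \<longlongrightarrow> y) F"
  shows "((\<lambda>z. f t (p z)) \<longlongrightarrow> f t y) F"
proof -
  have "((\<lambda>z. (\<lambda>q. f (fst q) (snd q)) (t, p z)) \<longlongrightarrow> (\<lambda>q. f (fst q) (snd q)) (t, y)) F"
    by (rule continuous_on_tendsto_compose[OF assms(1)])
      (use assms in \<open>auto intro!: tendsto_intros\<close>)
  then show ?thesis by simp
qed

lemma tendsto_lorentz_stage:
  assumes contE: "continuous_on ({0..} \<times> UNIV) (\<lambda>q. E (fst q) (snd q))"
    and contb: "continuous_on ({0..} \<times> UNIV) (\<lambda>q. b (fst q) (snd q))"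
    and bnz: "b t y \<noteq> 0" and t: "t \<ge> 0" and c: "c \<noteq> 0"
    and p: "(p \<longlongrightarrow> y) F" and s: "(s \<longlongrightarrow> 0) F" and g: "(g \<longlongrightarrow> 0) F"
    and eq: "\<forall>\<^sub>F z in F. s z *\<^sub>R u z = g z + c *\<^sub>R lorentz_force E b t (p z) (u z)"
  shows "(u \<longlongrightarrow> Udrift E b t y) F"
    and "((\<lambda>z. lorentz_force E b t (p z) (u z)) \<longlongrightarrow> 0) F"
  using tendsto_wedge_stage[OF c bnz s g tendsto_compose_time_slice[OF contb t p]
      tendsto_compose_time_slice[OF contE t p]] eq
  by (simp_all add: lorentz_force_def Udrift_def)

lemma rk_step_rescaled:
  assumes rk: "rk_step E b dt eps tn xn vn X V xn1 vn1" and eps: "eps \<noteq> 0"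
    and V: "\<And>i. V i = eps *\<^sub>R u i"
    and F1: "F1 = lorentz_force E b tn xn (u 1)"
    and F2: "F2 = lorentz_force E b tn xn (u 2)"
    and F3: "F3 = lorentz_force E b (tn + dt) (xn + dt *\<^sub>R u 2) (u 3)"
    and F4: "F4 = lorentz_force E b (tn + dt / 2) (xn + (dt / 4) *\<^sub>R (u 2 + u 3)) (u 4)"
  shows "eps\<^sup>2 *\<^sub>R u 1 = eps *\<^sub>R vn + (alpha * dt) *\<^sub>R F1"
    and "eps\<^sup>2 *\<^sub>R u 2 = (eps *\<^sub>R vn - (alpha * dt) *\<^sub>R F1) + (alpha * dt) *\<^sub>R F2"
    and "eps\<^sup>2 *\<^sub>R u 3 = (eps *\<^sub>R vn + ((1 - alpha) * dt) *\<^sub>R F2) + (alpha * dt) *\<^sub>R F3"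
    and "eps\<^sup>2 *\<^sub>R u 4 = (eps *\<^sub>R vn + dt *\<^sub>R (beta *\<^sub>R F1 + eta *\<^sub>R F2 + gamma *\<^sub>R F3))
           + (alpha * dt) *\<^sub>R F4"
    and "xn1 = xn + (dt / 6) *\<^sub>R (u 2 + u 3 + 4 *\<^sub>R u 4)"
    and "eps *\<^sub>R vn1 = eps *\<^sub>R vn + (dt / 6) *\<^sub>R (F2 + F3 + 4 *\<^sub>R F4)"
proof -
  have "(dt / eps) *\<^sub>R V 2 = dt *\<^sub>R u 2"
    "(dt / (4 * eps)) *\<^sub>R (V 2 + V 3) = (dt / 4) *\<^sub>R (u 2 + u 3)"
    "(dt / (6 * eps)) *\<^sub>R (V 2 + V 3 + 4 *\<^sub>R V 4) = (dt / 6) *\<^sub>R (u 2 + u 3 + 4 *\<^sub>R u 4)"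
    "\<And>i. (1 / eps) *\<^sub>R V i = u i"
    using eps by (simp_all add: V scaleR_add_right)
  note rk' = rk[unfolded rk_step_def Let_def this, folded lorentz_force_def]
  from rk' have V1: "V 1 = vn + (alpha * dt / eps) *\<^sub>R F1"
    and V2: "V 2 = vn - (alpha * dt / eps) *\<^sub>R F1 + (alpha * dt / eps) *\<^sub>R F2"
    and V3: "V 3 = vn + ((1 - alpha) * dt / eps) *\<^sub>R F2 + (alpha * dt / eps) *\<^sub>R F3"
    and V4: "V 4 = vn + (dt / eps) *\<^sub>R (beta *\<^sub>R F1 + eta *\<^sub>R F2 + gamma *\<^sub>R F3 + alpha *\<^sub>R F4)"
    and vn1_eq: "vn1 = vn + (dt / (6 * eps)) *\<^sub>R (F2 + F3 + 4 *\<^sub>R F4)"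
    unfolding F1 F2 F3 F4 by blast+
  from rk' show "xn1 = xn + (dt / 6) *\<^sub>R (u 2 + u 3 + 4 *\<^sub>R u 4)" by blast
  show "eps\<^sup>2 *\<^sub>R u 1 = eps *\<^sub>R vn + (alpha * dt) *\<^sub>R F1"
    using arg_cong[OF V1, of "scaleR eps"] eps
    by (simp add: V scaleR_add_right power2_eq_square scaleR_diff_right)
  show "eps\<^sup>2 *\<^sub>R u 2 = (eps *\<^sub>R vn - (alpha * dt) *\<^sub>R F1) + (alpha * dt) *\<^sub>R F2"
    using arg_cong[OF V2, of "scaleR eps"] eps
    by (simp add: V scaleR_add_right scaleR_diff_right power2_eq_square)
  show "eps\<^sup>2 *\<^sub>R u 3 = (eps *\<^sub>R vn + ((1 - alpha) * dt) *\<^sub>R F2) + (alpha * dt) *\<^sub>R F3"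
    using arg_cong[OF V3, of "scaleR eps"] eps
    by (simp add: V scaleR_add_right power2_eq_square scaleR_diff_right)
  show "eps\<^sup>2 *\<^sub>R u 4 = (eps *\<^sub>R vn + dt *\<^sub>R (beta *\<^sub>R F1 + eta *\<^sub>R F2 + gamma *\<^sub>R F3))
           + (alpha * dt) *\<^sub>R F4"
    using arg_cong[OF V4, of "scaleR eps"] eps
    by (simp add: V scaleR_add_right power2_eq_square scaleR_diff_right)
  show "eps *\<^sub>R vn1 = eps *\<^sub>R vn + (dt / 6) *\<^sub>R (F2 + F3 + 4 *\<^sub>R F4)"
    using eps vn1_eq by (simp add: scaleR_add_right)
qed

lemma tendsto_rk_step:
  fixes x v x' v' :: "real \<Rightarrow> real \<times> real" and X V :: "real \<Rightarrow> nat \<Rightarrow> real \<times> real"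
  assumes contE: "continuous_on ({0..} \<times> UNIV) (\<lambda>q. E (fst q) (snd q))"
    and contb: "continuous_on ({0..} \<times> UNIV) (\<lambda>q. b (fst q) (snd q))"
    and bnz: "\<forall>t\<ge>0. \<forall>z. b t z \<noteq> 0" and dt: "dt > 0" and tn: "tn \<ge> 0"
    and step: "\<forall>\<^sub>F eps in at_right 0.
      rk_step E b dt eps tn (x eps) (v eps) (X eps) (V eps) (x' eps) (v' eps)"
    and x: "(x \<longlongrightarrow> y) (at_right 0)" and w: "((\<lambda>eps. eps *\<^sub>R v eps) \<longlongrightarrow> 0) (at_right 0)"
  shows "(x' \<longlongrightarrow> y_step E b dt tn y) (at_right 0)"
    and "((\<lambda>eps. eps *\<^sub>R v' eps) \<longlongrightarrow> 0) (at_right 0)"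
proof -
  let ?F = "at_right (0::real)"
  define u where "u i eps = (1 / eps) *\<^sub>R V eps i" for i eps
  define F1 where "F1 eps = lorentz_force E b tn (x eps) (u 1 eps)" for eps
  define F2 where "F2 eps = lorentz_force E b tn (x eps) (u 2 eps)" for eps
  define p3 where "p3 eps = x eps + dt *\<^sub>R u 2 eps" for eps
  define F3 where "F3 eps = lorentz_force E b (tn + dt) (p3 eps) (u 3 eps)" for eps
  define p4 where "p4 eps = x eps + (dt / 4) *\<^sub>R (u 2 eps + u 3 eps)" for eps
  define F4 where "F4 eps = lorentz_force E b (tn + dt / 2) (p4 eps) (u 4 eps)" for eps
  define g where "g eps = eps *\<^sub>R v eps" for eps
  have eqs: "\<forall>\<^sub>F eps in ?F.
       eps\<^sup>2 *\<^sub>R u 1 eps = g eps + (alpha * dt) *\<^sub>R F1 eps \<and>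
       eps\<^sup>2 *\<^sub>R u 2 eps = (g eps - (alpha * dt) *\<^sub>R F1 eps) + (alpha * dt) *\<^sub>R F2 eps \<and>
       eps\<^sup>2 *\<^sub>R u 3 eps = (g eps + ((1 - alpha) * dt) *\<^sub>R F2 eps) + (alpha * dt) *\<^sub>R F3 eps \<and>
       eps\<^sup>2 *\<^sub>R u 4 eps = (g eps + dt *\<^sub>R (beta *\<^sub>R F1 eps + eta *\<^sub>R F2 eps + gamma *\<^sub>R F3 eps))
          + (alpha * dt) *\<^sub>R F4 eps \<and>
       x' eps = x eps + (dt / 6) *\<^sub>R (u 2 eps + u 3 eps + 4 *\<^sub>R u 4 eps) \<and>
       eps *\<^sub>R v' eps = g eps + (dt / 6) *\<^sub>R (F2 eps + F3 eps + 4 *\<^sub>R F4 eps)"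
    using step eventually_at_right_less[of 0]
  proof eventually_elim
    case (elim eps)
    then have "eps \<noteq> 0" by simp
    then have "V eps i = eps *\<^sub>R u i eps" for i by (simp add: u_def)
    from rk_step_rescaled[OF elim(1) \<open>eps \<noteq> 0\<close> this F1_def F2_def F3_def[unfolded p3_def]
        F4_def[unfolded p4_def]]
    show ?case by (simp add: g_def)
  qed
  have s: "((\<lambda>eps::real. eps\<^sup>2) \<longlongrightarrow> 0) ?F" by (intro tendsto_eq_intros) auto
  have c: "alpha * dt \<noteq> 0" using dt by (simp add: alpha_def)
  have tn': "tn + dt \<ge> 0" "tn + dt / 2 \<ge> 0" using tn dt by simp_all
  have b: "b t z \<noteq> 0" if "t \<ge> 0" for t z using bnz that by blast
  have g: "(g \<longlongrightarrow> 0) ?F" using w by (simp add: g_def[abs_def])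
  have stage1: "(u 1 \<longlongrightarrow> Udrift E b tn y) ?F" "(F1 \<longlongrightarrow> 0) ?F"
    using tendsto_lorentz_stage[OF contE contb b[OF tn] tn c x s g, of "u 1"] eqs
    by (simp_all add: F1_def[abs_def] eventually_mono)
  have g2: "((\<lambda>eps. g eps - (alpha * dt) *\<^sub>R F1 eps) \<longlongrightarrow> 0) ?F"
    using g stage1(2) by (intro tendsto_eq_intros) auto
  have stage2: "(u 2 \<longlongrightarrow> Udrift E b tn y) ?F" "(F2 \<longlongrightarrow> 0) ?F"
    using tendsto_lorentz_stage[OF contE contb b[OF tn] tn c x s g2, of "u 2"] eqs
    by (simp_all add: F2_def[abs_def] eventually_mono)
  define y2 where "y2 = y + dt *\<^sub>R Udrift E b tn y"
  have p3_lim: "(p3 \<longlongrightarrow> y2) ?F"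
    unfolding p3_def[abs_def] y2_def using x stage2(1) by (intro tendsto_intros)
  have g3: "((\<lambda>eps. g eps + ((1 - alpha) * dt) *\<^sub>R F2 eps) \<longlongrightarrow> 0) ?F"
    using g stage2(2) by (intro tendsto_eq_intros) auto
  have stage3: "(u 3 \<longlongrightarrow> Udrift E b (tn + dt) y2) ?F" "(F3 \<longlongrightarrow> 0) ?F"
    using tendsto_lorentz_stage[OF contE contb b[OF tn'(1)] tn'(1) c p3_lim s g3, of "u 3"] eqs
    by (simp_all add: F3_def[abs_def] eventually_mono)
  define y3 where "y3 = y + (dt / 4) *\<^sub>R (Udrift E b tn y + Udrift E b (tn + dt) y2)"
  have p4_lim: "(p4 \<longlongrightarrow> y3) ?F"
    unfolding p4_def[abs_def] y3_def using x stage2(1) stage3(1) by (intro tendsto_intros)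
  have g4: "((\<lambda>eps. g eps + dt *\<^sub>R (beta *\<^sub>R F1 eps + eta *\<^sub>R F2 eps + gamma *\<^sub>R F3 eps))
      \<longlongrightarrow> 0) ?F"
    using g stage1(2) stage2(2) stage3(2) by (intro tendsto_eq_intros) auto
  have stage4: "(u 4 \<longlongrightarrow> Udrift E b (tn + dt / 2) y3) ?F" "(F4 \<longlongrightarrow> 0) ?F"
    using tendsto_lorentz_stage[OF contE contb b[OF tn'(2)] tn'(2) c p4_lim s g4, of "u 4"] eqs
    by (simp_all add: F4_def[abs_def] eventually_mono)
  have "((\<lambda>eps. x eps + (dt / 6) *\<^sub>R (u 2 eps + u 3 eps + 4 *\<^sub>R u 4 eps))
      \<longlongrightarrow> y_step E b dt tn y) ?F"
    unfolding y_step_def Let_def y2_def[symmetric] y3_def[symmetric]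
    using x stage2(1) stage3(1) stage4(1) by (intro tendsto_intros)
  then show "(x' \<longlongrightarrow> y_step E b dt tn y) ?F"
    by (rule Lim_transform_eventually) (use eqs in \<open>simp add: eventually_mono\<close>)
  have "((\<lambda>eps. g eps + (dt / 6) *\<^sub>R (F2 eps + F3 eps + 4 *\<^sub>R F4 eps)) \<longlongrightarrow> 0) ?F"
    using g stage2(2) stage3(2) stage4(2) by (intro tendsto_eq_intros) auto
  then show "((\<lambda>eps. eps *\<^sub>R v' eps) \<longlongrightarrow> 0) ?F"
    by (rule Lim_transform_eventually) (use eqs in \<open>simp add: eventually_mono\<close>)
qed

theorem proposition3p4:
  fixes E :: "real \<Rightarrow> real \<times> real \<Rightarrow> real \<times> real"
    and b :: "real \<Rightarrow> real \<times> real \<Rightarrow> real"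
    and dt T :: real
    and x v :: "real \<Rightarrow> nat \<Rightarrow> real \<times> real"
    and X V :: "real \<Rightarrow> nat \<Rightarrow> nat \<Rightarrow> real \<times> real"
    and y0 :: "real \<times> real"
  assumes contE: "continuous_on ({0..} \<times> UNIV) (\<lambda>p. E (fst p) (snd p))"
    and contb: "continuous_on ({0..} \<times> UNIV) (\<lambda>p. b (fst p) (snd p))"
    and bnz: "\<forall>t\<ge>0. \<forall>z. b t z \<noteq> 0"
    and dt: "dt > 0" and T: "T > 0"
    and scheme: "\<forall>eps>0. \<forall>n < nat \<lfloor>T / dt\<rfloor>.
        rk_step E b dt eps (real n * dt) (x eps n) (v eps n) (X eps n) (V eps n)
          (x eps (Suc n)) (v eps (Suc n))"
    and bounded: "\<forall>n. 1 \<le> n \<and> n \<le> nat \<lfloor>T / dt\<rfloor> \<longrightarrow>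
        (\<exists>C. \<forall>eps>0. norm (x eps n, eps *\<^sub>R v eps n) \<le> C)"
    and init: "((\<lambda>eps. (x eps 0, eps *\<^sub>R v eps 0)) \<longlongrightarrow> (y0, 0)) (at_right 0)"
  shows "\<forall>n \<le> nat \<lfloor>T / dt\<rfloor>. ((\<lambda>eps. x eps n) \<longlongrightarrow> y_seq E b dt y0 n) (at_right 0)"
proof -
  have "((\<lambda>eps. x eps n) \<longlongrightarrow> y_seq E b dt y0 n) (at_right 0) \<and>
      ((\<lambda>eps. eps *\<^sub>R v eps n) \<longlongrightarrow> 0) (at_right 0)" if "n \<le> nat \<lfloor>T / dt\<rfloor>" for n
    using that
  proof (induction n)
    case 0
    show ?case using tendsto_fst[OF init] tendsto_snd[OF init] by simp
  next
    case (Suc n)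
    then have IH: "((\<lambda>eps. x eps n) \<longlongrightarrow> y_seq E b dt y0 n) (at_right 0)"
      "((\<lambda>eps. eps *\<^sub>R v eps n) \<longlongrightarrow> 0) (at_right 0)" by simp_all
    have "\<forall>\<^sub>F eps in at_right 0. rk_step E b dt eps (real n * dt) (x eps n) (v eps n)
        (X eps n) (V eps n) (x eps (Suc n)) (v eps (Suc n))"
      using eventually_at_right_less[of 0] by eventually_elim (use scheme Suc.prems in auto)
    from tendsto_rk_step[OF contE contb bnz dt _ this IH] dt show ?case by simp
  qed
  then show ?thesis by blast
qed

end
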